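(* Every conditional antimatroid is dismantlable, and every ample class of VC-dimension at most $2$ is dismantlable.
   Context: $X$ is a finite set and a concept class is $C\subseteq 2^X$. $Y$ is shattered by $C$ if $\{c\cap Y:c\in C\}=2^Y$; VC-dimension is the maximum size of a shattered set. A cube of $2^X$ is $\{T\cup Z:Z\subseteq Y\}$ with $Y\subseteq X$, $T\subseteq X\setminus Y$ ($Y$ its support); $C$ is ample if every set shattered by $C$ is the support of a cube contained in $C$. $C$ is dismantlable if it admits an ordering $c_1,\dots,c_m$ of all its concepts such that every level set $\{c_1,\dots,c_i\}$ is ample (equivalently, each $c_i$ is a corner of $\{c_1,\dots,c_i\}$, i.e. lies in exactly one inclusion-maximal cube contained in it). A conditional antimatroid is a class $C$ with $\varnothing\in C$, closed under intersection, such that every $c\in C$ is the smallest member of $C$ containing $\mathrm{ex}(c)$, where $\mathrm{ex}(c)=\{x\in c: c\setminus\{x\}\in C\}$ is the set of extremal points of $c$. *)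

theory Defs
  imports Main
begin

definition shatters :: "'a set set \<Rightarrow> 'a set \<Rightarrow> bool" where
  "shatters C Y \<longleftrightarrow> {c \<inter> Y | c. c \<in> C} = Pow Y"

definition vc_dim :: "'a set \<Rightarrow> 'a set set \<Rightarrow> nat" where
  "vc_dim X C = Max {card Y | Y. Y \<subseteq> X \<and> shatters C Y}"

definition cube :: "'a set \<Rightarrow> 'a set \<Rightarrow> 'a set set" where
  "cube Y T = {T \<union> Z | Z. Z \<subseteq> Y}"

definition ample :: "'a set \<Rightarrow> 'a set set \<Rightarrow> bool" where
  "ample X C \<longleftrightarrow>
     (\<forall>Y. Y \<subseteq> X \<and> shatters C Y \<longrightarrow> (\<exists>T. T \<subseteq> X - Y \<and> cube Y T \<subseteq> C))"

definition dismantlable :: "'a set \<Rightarrow> 'a set set \<Rightarrow> bool" where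
  "dismantlable X C \<longleftrightarrow>
     (\<exists>cs. distinct cs \<and> set cs = C \<and>
           (\<forall>i \<in> {1..length cs}. ample X (set (take i cs))))"

definition ex_pts :: "'a set set \<Rightarrow> 'a set \<Rightarrow> 'a set" where
  "ex_pts C c = {x \<in> c. c - {x} \<in> C}"

definition cond_antimatroid :: "'a set set \<Rightarrow> bool" where
  "cond_antimatroid C \<longleftrightarrow>
     {} \<in> C \<and>
     (\<forall>c \<in> C. \<forall>c' \<in> C. c \<inter> c' \<in> C) \<and>
     (\<forall>c \<in> C. \<forall>c' \<in> C. ex_pts C c \<subseteq> c' \<longrightarrow> c \<subseteq> c')"

end

(*
  A conditional antimatroid C is ample: for a shattered set Y, every point of Y is extremal
  in the least member a of C containing Y, and closure under intersection then puts the whole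
  cube between a - Y and a into C.  Removing an inclusion-maximal member keeps C a conditional
  antimatroid.

  An ample class has exactly as many strongly shattered sets (supports of cubes) as concepts,
  and deleting a corner destroys only the support of its maximal cube, so removing a corner
  preserves ampleness.  Corners exist when the VC-dimension is at most 2: by induction on |C|,
  every proper ample subclass F of VC-dimension at most 1 (a tree) misses a corner of C.
  Either a halfspace of C is handed to the induction, with the concepts that have their
  x-neighbour in C as the new tree, or a leaf f of F is alone in its halfspace of C, in which
  case f is a corner and the induction proceeds on C - {f}.
*)

theory Submission
  imports Defs
begin

lemma mem_cube [simp]: "e \<in> cube Y T \<longleftrightarrow> T \<subseteq> e \<and> e \<subseteq> T \<union> Y"
proof
  assume "T \<subseteq> e \<and> e \<subseteq> T \<union> Y"
  then have "e = T \<union> (e \<inter> Y)" by blast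
  then show "e \<in> cube Y T" unfolding cube_def by blast
qed (auto simp: cube_def)

lemma cube_subset_cube: "cube Y T \<subseteq> cube S U \<longleftrightarrow> U \<subseteq> T \<and> T \<union> Y \<subseteq> U \<union> S"
proof
  assume "cube Y T \<subseteq> cube S U"
  moreover have "T \<in> cube Y T" "T \<union> Y \<in> cube Y T" by auto
  ultimately show "U \<subseteq> T \<and> T \<union> Y \<subseteq> U \<union> S" by (meson mem_cube subsetD)
qed (simp add: subset_iff, blast)

lemma shatters_iff: "shatters C Y \<longleftrightarrow> (\<forall>Z\<subseteq>Y. \<exists>c\<in>C. c \<inter> Y = Z)"
proof -
  have "{c \<inter> Y | c. c \<in> C} \<subseteq> Pow Y" by blast
  then have "shatters C Y \<longleftrightarrow> Pow Y \<subseteq> {c \<inter> Y | c. c \<in> C}"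
    unfolding shatters_def by blast
  then show ?thesis by blast
qed

lemma shatters_mono: "shatters D Y \<Longrightarrow> D \<subseteq> E \<Longrightarrow> shatters E Y"
  unfolding shatters_iff by (meson subsetD)

lemma shatters_subset: "shatters D Y \<Longrightarrow> D \<subseteq> Pow X \<Longrightarrow> Y \<subseteq> X"
  unfolding shatters_iff by blast

lemma shatters_singletonI: "a \<in> D \<Longrightarrow> b \<in> D \<Longrightarrow> z \<in> a \<Longrightarrow> z \<notin> b \<Longrightarrow> shatters D {z}"
  unfolding shatters_iff by (auto simp: subset_singleton_iff)

lemma shatters_doubletonI:
  assumes "\<And>bx bz. \<exists>c\<in>D. (x \<in> c \<longleftrightarrow> bx) \<and> (z \<in> c \<longleftrightarrow> bz)"
  shows "shatters D {x, z}"
  unfolding shatters_iff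
proof (intro allI impI)
  fix Z assume "Z \<subseteq> {x, z}"
  obtain c where "c \<in> D" "x \<in> c \<longleftrightarrow> x \<in> Z" "z \<in> c \<longleftrightarrow> z \<in> Z" using assms by blast
  then have "c \<inter> {x, z} = Z" using \<open>Z \<subseteq> {x, z}\<close> by blast
  with \<open>c \<in> D\<close> show "\<exists>c\<in>D. c \<inter> {x, z} = Z" by blast
qed

lemma not_shatters_empty: "\<not> shatters {} Y"
  unfolding shatters_iff by blast

lemma shatters_singleton_class: "shatters {f} Y \<Longrightarrow> Y = {}"
  unfolding shatters_iff by blast

lemma ample_empty: "ample X {}"
  unfolding ample_def using not_shatters_empty by blast

lemma ample_singleton:
  assumes "f \<subseteq> X" shows "ample X {f}"
  unfolding ample_def
proof (intro allI impI)
  fix Y assume "Y \<subseteq> X \<and> shatters {f} Y"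
  then have "Y = {}" using shatters_singleton_class by blast
  moreover have "cube {} f \<subseteq> {f}" by auto
  ultimately show "\<exists>T. T \<subseteq> X - Y \<and> cube Y T \<subseteq> {f}" using assms by blast
qed

lemma ampleE:
  assumes "ample X D" "Y \<subseteq> X" "shatters D Y"
  obtains T where "T \<subseteq> X - Y" "cube Y T \<subseteq> D"
  using assms unfolding ample_def by meson

lemma ample_edge:
  assumes "ample X D" "z \<in> X" "shatters D {z}"
  obtains T where "z \<notin> T" "T \<in> D" "insert z T \<in> D"
proof -
  obtain T where "T \<subseteq> X - {z}" "cube {z} T \<subseteq> D"
    using assms by (elim ampleE) simp_all
  moreover have "T \<in> cube {z} T" "insert z T \<in> cube {z} T" by auto
  ultimately show ?thesis using that by blast
qed

definition vc_bounded :: "'a set \<Rightarrow> nat \<Rightarrow> 'a set set \<Rightarrow> bool" where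
  "vc_bounded X k D \<longleftrightarrow> (\<forall>Y \<subseteq> X. shatters D Y \<longrightarrow> card Y \<le> k)"

lemma vc_boundedD: "vc_bounded X k D \<Longrightarrow> Y \<subseteq> X \<Longrightarrow> shatters D Y \<Longrightarrow> card Y \<le> k"
  unfolding vc_bounded_def by blast

lemma vc_bounded_mono: "vc_bounded X k D \<Longrightarrow> E \<subseteq> D \<Longrightarrow> vc_bounded X k E"
  unfolding vc_bounded_def using shatters_mono by blast

lemma vc_bounded_empty: "vc_bounded X k {}"
  unfolding vc_bounded_def using not_shatters_empty by blast

lemma vc_bounded_singleton: "vc_bounded X k {f}"
  unfolding vc_bounded_def by (auto dest: shatters_singleton_class)

lemma vc_bounded_vc_dim:
  assumes "finite X" "vc_dim X C \<le> k"
  shows "vc_bounded X k C"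
  unfolding vc_bounded_def
proof (intro allI impI)
  fix Y assume "Y \<subseteq> X" "shatters C Y"
  have "finite (card ` Pow X)" using assms(1) by simp
  then have "finite {card Y | Y. Y \<subseteq> X \<and> shatters C Y}"
    by (rule finite_subset[rotated]) blast
  then have "card Y \<le> vc_dim X C"
    unfolding vc_dim_def using \<open>Y \<subseteq> X\<close> \<open>shatters C Y\<close> by (blast intro: Max_ge)
  with assms(2) show "card Y \<le> k" by simp
qed

lemma vc_bounded_1_doubleton:
  "vc_bounded X 1 D \<Longrightarrow> x \<in> X \<Longrightarrow> z \<in> X \<Longrightarrow> x \<noteq> z \<Longrightarrow> \<not> shatters D {x, z}"
proof
  assume "vc_bounded X 1 D" "x \<in> X" "z \<in> X" "x \<noteq> z" "shatters D {x, z}"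
  then have "card {x, z} \<le> 1" by (intro vc_boundedD) simp_all
  with \<open>x \<noteq> z\<close> show False by simp
qed

section \<open>The sandwich lemma\<close>

text \<open>\<open>cube_supports X D\<close> is the family of sets strongly shattered by \<open>D\<close>; \<open>deletion x D\<close> and
  \<open>reduction x D\<close> are the restriction of \<open>D\<close> to \<open>X - {x}\<close> and the reduction \<open>D\<^sup>x\<close>.\<close>

definition cube_supports :: "'a set \<Rightarrow> 'a set set \<Rightarrow> 'a set set" where
  "cube_supports X D = {Y. Y \<subseteq> X \<and> (\<exists>T. T \<subseteq> X - Y \<and> cube Y T \<subseteq> D)}"

definition shattered_sets :: "'a set \<Rightarrow> 'a set set \<Rightarrow> 'a set set" where
  "shattered_sets X D = {Y. Y \<subseteq> X \<and> shatters D Y}"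

definition deletion :: "'a \<Rightarrow> 'a set set \<Rightarrow> 'a set set" where
  "deletion x D = (\<lambda>d. d - {x}) ` D"

definition reduction :: "'a \<Rightarrow> 'a set set \<Rightarrow> 'a set set" where
  "reduction x D = {e \<in> D. x \<notin> e \<and> insert x e \<in> D}"

lemma cube_supportsI: "Y \<subseteq> X \<Longrightarrow> T \<subseteq> X - Y \<Longrightarrow> cube Y T \<subseteq> D \<Longrightarrow> Y \<in> cube_supports X D"
  unfolding cube_supports_def by blast

lemma cube_supportsE:
  assumes "Y \<in> cube_supports X D"
  obtains T where "Y \<subseteq> X" "T \<subseteq> X - Y" "cube Y T \<subseteq> D"
  using assms unfolding cube_supports_def by blast

lemma cube_supports_Pow: "cube_supports X D \<subseteq> Pow X"
  unfolding cube_supports_def by blast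

lemma shattered_sets_Pow: "shattered_sets X D \<subseteq> Pow X"
  unfolding shattered_sets_def by blast

lemma finite_cube_supports: "finite X \<Longrightarrow> finite (cube_supports X D)"
  using cube_supports_Pow by (rule finite_subset) simp

lemma finite_shattered_sets: "finite X \<Longrightarrow> finite (shattered_sets X D)"
  using shattered_sets_Pow by (rule finite_subset) simp

lemma cube_supports_empty: "cube_supports X {} = {}"
proof -
  have "\<not> cube Y T \<subseteq> {}" for Y T :: "'a set" using mem_cube[of T Y T] by blast
  then show ?thesis unfolding cube_supports_def by blast
qed

lemma shattered_sets_subset_cube_supports:
  assumes "ample X D"
  shows "shattered_sets X D \<subseteq> cube_supports X D"
proof
  fix Y assume "Y \<in> shattered_sets X D"
  then have "Y \<subseteq> X" "shatters D Y" unfolding shattered_sets_def by simp_all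
  moreover from assms this obtain T where "T \<subseteq> X - Y" "cube Y T \<subseteq> D" by (rule ampleE)
  ultimately show "Y \<in> cube_supports X D" by (intro cube_supportsI)
qed

lemma deletion_Pow: "D \<subseteq> Pow X \<Longrightarrow> deletion x D \<subseteq> Pow (X - {x})"
  unfolding deletion_def by blast

lemma reduction_Pow: "D \<subseteq> Pow X \<Longrightarrow> reduction x D \<subseteq> Pow (X - {x})"
  unfolding reduction_def by blast

lemma deletion_eq: "deletion x D = {d \<in> D. x \<notin> d} \<union> (\<lambda>d. d - {x}) ` {d \<in> D. x \<in> d}"
proof -
  have "(\<lambda>d. d - {x}) ` D = (\<lambda>d. d - {x}) ` ({d \<in> D. x \<notin> d} \<union> {d \<in> D. x \<in> d})"
    by (rule arg_cong[where f = "image _"]) blast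
  also have "\<dots> = (\<lambda>d. d - {x}) ` {d \<in> D. x \<notin> d} \<union> (\<lambda>d. d - {x}) ` {d \<in> D. x \<in> d}"
    by (rule image_Un)
  also have "(\<lambda>d. d - {x}) ` {d \<in> D. x \<notin> d} = {d \<in> D. x \<notin> d}"
    by (rule image_cong[OF refl, where g = id, simplified]) simp
  finally show ?thesis unfolding deletion_def .
qed

lemma reduction_eq: "reduction x D = {d \<in> D. x \<notin> d} \<inter> (\<lambda>d. d - {x}) ` {d \<in> D. x \<in> d}"
proof
  show "reduction x D \<subseteq> {d \<in> D. x \<notin> d} \<inter> (\<lambda>d. d - {x}) ` {d \<in> D. x \<in> d}"
  proof
    fix e assume "e \<in> reduction x D"
    then have "e \<in> D" "x \<notin> e" "insert x e \<in> {d \<in> D. x \<in> d}" "e = insert x e - {x}"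
      unfolding reduction_def by auto
    then show "e \<in> {d \<in> D. x \<notin> d} \<inter> (\<lambda>d. d - {x}) ` {d \<in> D. x \<in> d}" by blast
  qed
  show "{d \<in> D. x \<notin> d} \<inter> (\<lambda>d. d - {x}) ` {d \<in> D. x \<in> d} \<subseteq> reduction x D"
    unfolding reduction_def by (auto simp: insert_absorb)
qed

lemma card_deletion_reduction:
  assumes "finite D"
  shows "card D = card (deletion x D) + card (reduction x D)"
proof -
  let ?out = "{d \<in> D. x \<notin> d}" and ?in = "{d \<in> D. x \<in> d}"
  have fin: "finite ?out" "finite ?in" "finite ((\<lambda>d. d - {x}) ` ?in)" using assms by simp_all
  have "inj_on (\<lambda>d. d - {x}) ?in" by (rule inj_onI) (metis insert_Diff mem_Collect_eq)
  then have "card ((\<lambda>d. d - {x}) ` ?in) = card ?in" by (rule card_image)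
  moreover have "card (?out \<union> ?in) = card ?out + card ?in"
    using fin by (intro card_Un_disjoint) auto
  moreover have "?out \<union> ?in = D" by blast
  ultimately show ?thesis
    unfolding deletion_eq reduction_eq using card_Un_Int[OF fin(1,3)] by simp
qed

lemma card_Un_insert_image:
  assumes "finite X" "A \<subseteq> Pow (X - {x})" "B \<subseteq> Pow (X - {x})"
  shows "card (A \<union> insert x ` B) = card A + card B"
proof -
  have fin: "finite A" "finite B" using assms by (meson finite_Diff finite_Pow_iff finite_subset)+
  have "inj_on (insert x) B"
  proof (rule inj_onI)
    fix a b assume "a \<in> B" "b \<in> B" "insert x a = insert x b"
    moreover from \<open>a \<in> B\<close> \<open>b \<in> B\<close> have "x \<notin> a" "x \<notin> b" using assms(3) by auto
    ultimately show "a = b" by (simp add: insert_ident)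
  qed
  then have "card (insert x ` B) = card B" by (rule card_image)
  moreover have "A \<inter> insert x ` B = {}" using assms(2) by auto
  ultimately show ?thesis using fin by (simp add: card_Un_disjoint)
qed

lemma cube_supports_split:
  assumes "x \<in> X"
  shows "cube_supports X D \<subseteq>
    cube_supports (X - {x}) (deletion x D) \<union> insert x ` cube_supports (X - {x}) (reduction x D)"
proof
  fix Y assume "Y \<in> cube_supports X D"
  then obtain T where Y: "Y \<subseteq> X" and T: "T \<subseteq> X - Y" and cube: "cube Y T \<subseteq> D"
    by (rule cube_supportsE)
  show "Y \<in> cube_supports (X - {x}) (deletion x D)
      \<union> insert x ` cube_supports (X - {x}) (reduction x D)"
  proof (cases "x \<in> Y")
    case False
    have "cube Y (T - {x}) \<subseteq> deletion x D"
    proof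
      fix e assume e: "e \<in> cube Y (T - {x})"
      then have "e \<union> (T \<inter> {x}) \<in> cube Y T" by auto
      then have "e \<union> (T \<inter> {x}) \<in> D" using cube by blast
      moreover have "e = e \<union> (T \<inter> {x}) - {x}" using e False by auto
      ultimately show "e \<in> deletion x D" unfolding deletion_def by blast
    qed
    then have "Y \<in> cube_supports (X - {x}) (deletion x D)"
      using Y T False by (intro cube_supportsI) auto
    then show ?thesis by blast
  next
    case True
    have "x \<notin> T" using T True by blast
    have "cube (Y - {x}) T \<subseteq> reduction x D"
    proof
      fix e assume e: "e \<in> cube (Y - {x}) T"
      then have "e \<in> cube Y T" "insert x e \<in> cube Y T" using True by auto
      moreover have "x \<notin> e" using e \<open>x \<notin> T\<close> by auto
      ultimately show "e \<in> reduction x D" using cube unfolding reduction_def by blast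
    qed
    then have "Y - {x} \<in> cube_supports (X - {x}) (reduction x D)"
      using Y T \<open>x \<notin> T\<close> by (intro cube_supportsI) auto
    then show ?thesis using True by (metis UnI2 image_eqI insert_Diff)
  qed
qed

lemma shatters_deletion_iff:
  assumes "x \<notin> Y"
  shows "shatters (deletion x D) Y \<longleftrightarrow> shatters D Y"
proof
  assume sh: "shatters (deletion x D) Y"
  show "shatters D Y" unfolding shatters_iff
  proof (intro allI impI)
    fix Z assume "Z \<subseteq> Y"
    then obtain d where "d \<in> D" "(d - {x}) \<inter> Y = Z"
      using sh unfolding shatters_iff deletion_def by blast
    then show "\<exists>c\<in>D. c \<inter> Y = Z" using assms by blast
  qed
next
  assume sh: "shatters D Y"
  show "shatters (deletion x D) Y" unfolding shatters_iff
  proof (intro allI impI)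
    fix Z assume "Z \<subseteq> Y"
    then obtain c where "c \<in> D" "c \<inter> Y = Z" using sh unfolding shatters_iff by blast
    then have "c - {x} \<in> deletion x D" "(c - {x}) \<inter> Y = Z"
      using assms unfolding deletion_def by auto
    then show "\<exists>c\<in>deletion x D. c \<inter> Y = Z" by blast
  qed
qed

lemma shatters_insert_if_reduction:
  assumes "x \<notin> Y" "shatters (reduction x D) Y"
  shows "shatters D (insert x Y)"
  unfolding shatters_iff
proof (intro allI impI)
  fix Z assume "Z \<subseteq> insert x Y"
  then have "Z - {x} \<subseteq> Y" by blast
  then obtain e where "e \<in> reduction x D" "e \<inter> Y = Z - {x}"
    using assms(2) unfolding shatters_iff by blast
  then have e: "e \<in> D" "x \<notin> e" "insert x e \<in> D" "e \<inter> Y = Z - {x}"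
    unfolding reduction_def by auto
  show "\<exists>c\<in>D. c \<inter> insert x Y = Z"
  proof (cases "x \<in> Z")
    case True
    then have "insert x e \<inter> insert x Y = Z" using e(4) by blast
    with e(3) show ?thesis by blast
  next
    case False
    then have "e \<inter> insert x Y = Z" using e(2,4) by blast
    with e(1) show ?thesis by blast
  qed
qed

lemma shattered_sets_split:
  assumes "x \<in> X"
  shows "shattered_sets (X - {x}) (deletion x D)
    \<union> insert x ` shattered_sets (X - {x}) (reduction x D)
    \<subseteq> shattered_sets X D"
proof safe
  fix Y assume "Y \<in> shattered_sets (X - {x}) (deletion x D)"
  then have "Y \<subseteq> X - {x}" "shatters (deletion x D) Y" unfolding shattered_sets_def by simp_all
  moreover from this have "x \<notin> Y" by blast
  ultimately show "Y \<in> shattered_sets X D"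
    unfolding shattered_sets_def using shatters_deletion_iff[of x Y D] by auto
next
  fix Y assume "Y \<in> shattered_sets (X - {x}) (reduction x D)"
  then have "Y \<subseteq> X - {x}" "shatters (reduction x D) Y" unfolding shattered_sets_def by simp_all
  moreover from this have "x \<notin> Y" by blast
  ultimately have "insert x Y \<subseteq> X" "shatters D (insert x Y)"
    using assms by (auto intro: shatters_insert_if_reduction)
  then show "insert x Y \<in> shattered_sets X D" unfolding shattered_sets_def by simp
qed

lemma card_le_card_shattered_sets:
  assumes "finite X" "D \<subseteq> Pow X"
  shows "card D \<le> card (shattered_sets X D)"
  using assms
proof (induction X arbitrary: D rule: finite_psubset_induct)
  case (psubset X)
  show ?case
  proof (cases "X = {}")
    case True
    then have "D = {} \<or> D = {{}}" using psubset.prems by auto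
    moreover have "shatters {{}} {}" unfolding shatters_iff by simp
    ultimately show ?thesis
      using True finite_shattered_sets[of X]
      by (auto simp: shattered_sets_def card_gt_0_iff Suc_le_eq)
  next
    case False
    then obtain x where x: "x \<in> X" by blast
    then have "X - {x} \<subset> X" by blast
    note IH = psubset.IH[OF this]
    have "finite D" using psubset.hyps psubset.prems by (meson finite_Pow_iff finite_subset)
    then have "card D = card (deletion x D) + card (reduction x D)"
      by (rule card_deletion_reduction)
    also have "\<dots> \<le> card (shattered_sets (X - {x}) (deletion x D))
        + card (shattered_sets (X - {x}) (reduction x D))"
      using IH deletion_Pow[OF psubset.prems] reduction_Pow[OF psubset.prems] by (meson add_mono)
    also have "\<dots> = card (shattered_sets (X - {x}) (deletion x D)
        \<union> insert x ` shattered_sets (X - {x}) (reduction x D))"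
      by (rule card_Un_insert_image[OF psubset.hyps
        shattered_sets_Pow shattered_sets_Pow, symmetric])
    also have "\<dots> \<le> card (shattered_sets X D)"
      using shattered_sets_split[OF x] finite_shattered_sets[OF psubset.hyps]
      by (rule card_mono[rotated])
    finally show ?thesis .
  qed
qed

lemma card_cube_supports_le:
  assumes "finite X" "D \<subseteq> Pow X"
  shows "card (cube_supports X D) \<le> card D"
  using assms
proof (induction X arbitrary: D rule: finite_psubset_induct)
  case (psubset X)
  have "finite D" using psubset.hyps psubset.prems by (meson finite_Pow_iff finite_subset)
  show ?case
  proof (cases "X = {}")
    case True
    show ?thesis
    proof (cases "D = {}")
      case True
      then show ?thesis by (simp add: cube_supports_empty)
    next
      case False
      have "cube_supports X D \<subseteq> {{}}" using cube_supports_Pow[of X D] \<open>X = {}\<close> by simp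
      then have "card (cube_supports X D) \<le> card {{}::'a set}" by (intro card_mono) simp_all
      also have "\<dots> \<le> card D" using False \<open>finite D\<close> by (simp add: Suc_le_eq card_gt_0_iff)
      finally show ?thesis .
    qed
  next
    case False
    then obtain x where x: "x \<in> X" by blast
    then have "X - {x} \<subset> X" by blast
    note IH = psubset.IH[OF this]
    have "card (cube_supports X D) \<le>
        card (cube_supports (X - {x}) (deletion x D)
        \<union> insert x ` cube_supports (X - {x}) (reduction x D))"
      using cube_supports_split[OF x] finite_cube_supports[of "X - {x}"] psubset.hyps
      by (intro card_mono) auto
    also have "\<dots> = card (cube_supports (X - {x}) (deletion x D))
        + card (cube_supports (X - {x}) (reduction x D))"
      by (rule card_Un_insert_image[OF psubset.hyps cube_supports_Pow cube_supports_Pow])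
    also have "\<dots> \<le> card (deletion x D) + card (reduction x D)"
      using IH deletion_Pow[OF psubset.prems] reduction_Pow[OF psubset.prems] by (meson add_mono)
    also have "\<dots> = card D"
      using \<open>finite D\<close> by (rule card_deletion_reduction[symmetric])
    finally show ?thesis .
  qed
qed

lemma card_cube_supports_eq_split:
  assumes "finite X" "D \<subseteq> Pow X" "x \<in> X" "card (cube_supports X D) = card D"
  shows "card (cube_supports (X - {x}) (deletion x D)) = card (deletion x D)"
    and "cube_supports X D =
      cube_supports (X - {x}) (deletion x D) \<union> insert x ` cube_supports (X - {x}) (reduction x D)"
proof -
  let ?Del = "deletion x D" and ?Red = "reduction x D"
  let ?U = "cube_supports (X - {x}) ?Del \<union> insert x ` cube_supports (X - {x}) ?Red"
  have fin: "finite (X - {x})" using assms(1) by simp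
  have sub: "cube_supports X D \<subseteq> ?U" using assms(3) by (rule cube_supports_split)
  have finU: "finite ?U" using finite_cube_supports[OF fin] by simp
  have "card ?U = card (cube_supports (X - {x}) ?Del) + card (cube_supports (X - {x}) ?Red)"
    by (rule card_Un_insert_image[OF assms(1) cube_supports_Pow cube_supports_Pow])
  moreover have "card D = card ?Del + card ?Red"
    using assms(1,2) by (intro card_deletion_reduction) (meson finite_Pow_iff finite_subset)
  moreover note card_cube_supports_le[OF fin deletion_Pow[OF assms(2)]]
    card_cube_supports_le[OF fin reduction_Pow[OF assms(2)]] card_mono[OF finU sub] assms(4)
  ultimately have "card (cube_supports (X - {x}) ?Del) = card ?Del"
    and "card ?U \<le> card (cube_supports X D)" by linarith+
  then show "card (cube_supports (X - {x}) ?Del) = card ?Del"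
    and "cube_supports X D = ?U" using card_seteq[OF finU sub] by blast+
qed

lemma ample_if_card_cube_supports:
  assumes "finite X" "D \<subseteq> Pow X" "card (cube_supports X D) = card D"
  shows "ample X D"
  using assms
proof (induction X arbitrary: D rule: finite_psubset_induct)
  case (psubset X)
  show "ample X D" unfolding ample_def
  proof (intro allI impI, elim conjE)
    fix Y assume Y: "Y \<subseteq> X" and sh: "shatters D Y"
    show "\<exists>T. T \<subseteq> X - Y \<and> cube Y T \<subseteq> D"
    proof (cases "Y = X")
      case True
      have "cube X {} \<subseteq> D"
      proof
        fix e assume "e \<in> cube X {}"
        then obtain c where "c \<in> D" "c \<inter> X = e" using sh True unfolding shatters_iff by auto
        moreover have "c \<subseteq> X" using \<open>c \<in> D\<close> psubset.prems(1) by blast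
        ultimately show "e \<in> D" by (simp add: Int_absorb2)
      qed
      then show ?thesis using True by blast
    next
      case False
      then obtain x where x: "x \<in> X" "x \<notin> Y" using Y by blast
      note eq = card_cube_supports_eq_split[OF psubset.hyps psubset.prems(1) x(1) psubset.prems(2)]
      have "X - {x} \<subset> X" using x(1) by blast
      then have "ample (X - {x}) (deletion x D)"
        using psubset.IH deletion_Pow[OF psubset.prems(1)] eq(1) by blast
      moreover have "shatters (deletion x D) Y" using sh shatters_deletion_iff[OF x(2)] by simp
      moreover have "Y \<subseteq> X - {x}" using Y x(2) by blast
      ultimately obtain T where "T \<subseteq> X - {x} - Y" "cube Y T \<subseteq> deletion x D"
        by (elim ampleE)
      then have "Y \<in> cube_supports X D"
        unfolding eq(2) using \<open>Y \<subseteq> X - {x}\<close> by (blast intro: cube_supportsI)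
      then show ?thesis by (elim cube_supportsE) blast
    qed
  qed
qed

lemma ample_iff_card_cube_supports:
  assumes "finite X" "D \<subseteq> Pow X"
  shows "ample X D \<longleftrightarrow> card (cube_supports X D) = card D"
proof
  assume "ample X D"
  then have "card (shattered_sets X D) \<le> card (cube_supports X D)"
    by (intro card_mono finite_cube_supports assms(1) shattered_sets_subset_cube_supports)
  then show "card (cube_supports X D) = card D"
    using card_le_card_shattered_sets[OF assms] card_cube_supports_le[OF assms] by linarith
qed (rule ample_if_card_cube_supports[OF assms])

section \<open>Halfspaces and corners\<close>

definition halfspace :: "'a \<Rightarrow> bool \<Rightarrow> 'a set set \<Rightarrow> 'a set set" where
  "halfspace x s D = {d \<in> D. (x \<in> d) = s}"

lemma halfspace_subset: "halfspace x s D \<subseteq> D"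
  unfolding halfspace_def by blast

lemma card_halfspaces: "finite D \<Longrightarrow> card D = card (halfspace x True D) + card (halfspace x False D)"
  unfolding halfspace_def by (subst card_Un_disjoint[symmetric])
    (auto intro: arg_cong[where f = card])

lemma cube_subset_halfspace: "cube Y T \<subseteq> D \<Longrightarrow> x \<notin> Y \<Longrightarrow> cube Y T \<subseteq> halfspace x (x \<in> T) D"
  unfolding halfspace_def by auto

lemma cube_supports_halfspace_split:
  "cube_supports X D \<subseteq> cube_supports X (halfspace x True D) \<union>
    cube_supports X (halfspace x False D) \<union>
    insert x ` (cube_supports X (halfspace x True D) \<inter> cube_supports X (halfspace x False D))"
proof
  fix Y assume "Y \<in> cube_supports X D"
  then obtain T where Y: "Y \<subseteq> X" and T: "T \<subseteq> X - Y" and cube: "cube Y T \<subseteq> D"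
    by (rule cube_supportsE)
  have side: "Y' \<in> cube_supports X (halfspace x (x \<in> T') D)"
    if "x \<notin> Y'" "Y' \<subseteq> X" "T' \<subseteq> X - Y'" "cube Y' T' \<subseteq> cube Y T" for Y' T'
  proof -
    have "cube Y' T' \<subseteq> D" using that(4) cube by (rule order_trans)
    then have "cube Y' T' \<subseteq> halfspace x (x \<in> T') D" using that(1) by (rule cube_subset_halfspace)
    with that(2,3) show ?thesis by (rule cube_supportsI)
  qed
  show "Y \<in> cube_supports X (halfspace x True D) \<union> cube_supports X (halfspace x False D) \<union>
    insert x ` (cube_supports X (halfspace x True D) \<inter> cube_supports X (halfspace x False D))"
  proof (cases "x \<in> Y")
    case False
    then have "Y \<in> cube_supports X (halfspace x (x \<in> T) D)" using Y T by (intro side) simp_all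
    then show ?thesis by (cases "x \<in> T") simp_all
  next
    case True
    then have "x \<notin> T" "x \<in> X" using T Y by blast+
    have "Y - {x} \<in> cube_supports X (halfspace x (x \<in> T) D)"
      using Y T \<open>x \<notin> T\<close> by (intro side) (auto simp: cube_subset_cube)
    moreover have "Y - {x} \<in> cube_supports X (halfspace x (x \<in> insert x T) D)"
      using Y T True \<open>x \<in> X\<close> by (intro side) (auto simp: cube_subset_cube)
    ultimately have "Y - {x} \<in> cube_supports X (halfspace x True D)
        \<inter> cube_supports X (halfspace x False D)"
      using \<open>x \<notin> T\<close> by simp
    then have "insert x (Y - {x}) \<in>
      insert x ` (cube_supports X (halfspace x True D) \<inter> cube_supports X (halfspace x False D))"
      by (rule imageI)
    then show ?thesis using True by (simp add: insert_absorb)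
  qed
qed

lemma card_cube_supports_le_halfspaces:
  assumes "finite X"
  shows "card (cube_supports X D) \<le>
    card (cube_supports X (halfspace x True D)) + card (cube_supports X (halfspace x False D))"
proof -
  define A where "A = cube_supports X (halfspace x True D)"
  define B where "B = cube_supports X (halfspace x False D)"
  have fin: "finite A" "finite B"
    unfolding A_def B_def using assms by (simp_all add: finite_cube_supports)
  have "cube_supports X D \<subseteq> (A \<union> B) \<union> insert x ` (A \<inter> B)"
    unfolding A_def B_def by (rule cube_supports_halfspace_split)
  then have "card (cube_supports X D) \<le> card ((A \<union> B) \<union> insert x ` (A \<inter> B))"
    using fin by (intro card_mono) simp_all
  also have "\<dots> \<le> card (A \<union> B) + card (insert x ` (A \<inter> B))"
    by (rule card_Un_le)
  also have "\<dots> \<le> card (A \<union> B) + card (A \<inter> B)"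
    using card_image_le[of "A \<inter> B" "insert x"] fin by simp
  also have "\<dots> = card A + card B"
    using card_Un_Int[OF fin] by simp
  finally show ?thesis unfolding A_def B_def .
qed

lemma ample_halfspace:
  assumes "finite X" "D \<subseteq> Pow X" "ample X D"
  shows "ample X (halfspace x s D)"
proof -
  have P: "halfspace x b D \<subseteq> Pow X" for b using halfspace_subset assms(2) by (rule order_trans)
  have "finite D" using assms(1,2) by (meson finite_Pow_iff finite_subset)
  then have "card (halfspace x True D) + card (halfspace x False D) = card D"
    by (rule card_halfspaces[symmetric])
  also have "\<dots> = card (cube_supports X D)"
    using ample_iff_card_cube_supports[OF assms(1,2)] assms(3) by simp
  also have "\<dots> \<le> card (cube_supports X (halfspace x True D))
      + card (cube_supports X (halfspace x False D))"
    using assms(1) by (rule card_cube_supports_le_halfspaces)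
  moreover note card_cube_supports_le[OF assms(1) P, of True]
    card_cube_supports_le[OF assms(1) P, of False]
  ultimately have "card (cube_supports X (halfspace x True D)) = card (halfspace x True D)"
    and "card (cube_supports X (halfspace x False D)) = card (halfspace x False D)" by linarith+
  then show ?thesis by (cases s) (simp_all add: ample_if_card_cube_supports[OF assms(1) P])
qed

definition corner :: "'a set \<Rightarrow> 'a set set \<Rightarrow> 'a set \<Rightarrow> bool" where
  "corner X D c \<longleftrightarrow> c \<in> D \<and> (\<exists>S U. U \<subseteq> X - S \<and> c \<in> cube S U \<and> cube S U \<subseteq> D \<and>
     (\<forall>Y T. T \<subseteq> X - Y \<and> cube Y T \<subseteq> D \<and> c \<in> cube Y T \<longrightarrow> cube Y T \<subseteq> cube S U))"

lemma cornerI: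
  assumes "c \<in> D" "U \<subseteq> X - S" "c \<in> cube S U" "cube S U \<subseteq> D"
    "\<And>Y T. T \<subseteq> X - Y \<Longrightarrow> cube Y T \<subseteq> D \<Longrightarrow> c \<in> cube Y T \<Longrightarrow> cube Y T \<subseteq> cube S U"
  shows "corner X D c"
  unfolding corner_def using assms by meson

lemma cornerE:
  assumes "corner X D c"
  obtains S U where "c \<in> D" "c \<in> cube S U" "U \<subseteq> X - S" "cube S U \<subseteq> D"
    "\<And>Y T. T \<subseteq> X - Y \<Longrightarrow> cube Y T \<subseteq> D \<Longrightarrow> c \<in> cube Y T \<Longrightarrow> cube Y T \<subseteq> cube S U"
  using assms unfolding corner_def by meson

definition flip :: "'a \<Rightarrow> 'a set \<Rightarrow> 'a set" where
  "flip x d = (if x \<in> d then d - {x} else insert x d)"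

lemma mem_flip_iff [simp]: "y \<in> flip x d \<longleftrightarrow> (if y = x then x \<notin> d else y \<in> d)"
  unfolding flip_def by auto

lemma flip_neq: "flip x d \<noteq> d"
  by (metis mem_flip_iff)

lemma flip_subset_insert: "flip x d \<subseteq> insert x d"
  unfolding flip_def by auto

lemma subset_flipI: "U \<subseteq> d \<Longrightarrow> x \<notin> U \<Longrightarrow> U \<subseteq> flip x d"
  by auto

lemma shifted_subcube_avoiding:
  assumes "cube Y T \<subseteq> cube S U" "c \<in> cube Y T" "Y \<noteq> S"
    and "U \<subseteq> X - S" "S \<subseteq> X" "T \<subseteq> X - Y"
  obtains T' where "T' \<subseteq> X - Y" "cube Y T' \<subseteq> cube S U" "c \<notin> cube Y T'"
proof -
  have "U \<subseteq> T" "T \<union> Y \<subseteq> U \<union> S" using assms(1) by (simp_all add: cube_subset_cube)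
  then obtain s where s: "s \<in> S" "s \<notin> Y" "s \<notin> U" using assms(3,4,6) by blast
  have "flip s T \<subseteq> X - Y"
    using flip_subset_insert[of s T] assms(5,6) s(1,2) by blast
  moreover have "U \<subseteq> flip s T" using \<open>U \<subseteq> T\<close> s(3) by (rule subset_flipI)
  moreover have "flip s T \<union> Y \<subseteq> U \<union> S"
    using flip_subset_insert[of s T] \<open>T \<union> Y \<subseteq> U \<union> S\<close> s(1) by blast
  moreover have "c \<notin> cube Y (flip s T)"
  proof
    assume "c \<in> cube Y (flip s T)"
    then have "s \<in> c \<longleftrightarrow> s \<in> flip s T" using s(2) by auto
    moreover have "s \<in> c \<longleftrightarrow> s \<in> T" using assms(2) s(2) by auto
    ultimately show False by simp
  qed
  ultimately show ?thesis using that[of "flip s T"] by (simp add: cube_subset_cube)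
qed

lemma cube_supports_Diff_corner:
  assumes "D \<subseteq> Pow X" "corner X D c"
  obtains S where "S \<in> cube_supports X D" "cube_supports X D - {S} \<subseteq> cube_supports X (D - {c})"
proof -
  obtain S U where "c \<in> D" "c \<in> cube S U" and U: "U \<subseteq> X - S" and SU: "cube S U \<subseteq> D"
    and max: "\<And>Y T. T \<subseteq> X - Y \<Longrightarrow> cube Y T \<subseteq> D \<Longrightarrow> c \<in> cube Y T \<Longrightarrow> cube Y T \<subseteq> cube S U"
    using assms(2) by (elim cornerE) blast
  have "U \<union> S \<in> cube S U" by auto
  then have "S \<subseteq> X" using SU assms(1) by blast
  have "cube_supports X D - {S} \<subseteq> cube_supports X (D - {c})"
  proof
    fix Y assume "Y \<in> cube_supports X D - {S}"
    then have "Y \<noteq> S" "Y \<in> cube_supports X D" by simp_all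
    then obtain T where Y: "Y \<subseteq> X" and T: "T \<subseteq> X - Y" and cube: "cube Y T \<subseteq> D"
      by (elim cube_supportsE)
    show "Y \<in> cube_supports X (D - {c})"
    proof (cases "c \<in> cube Y T")
      case False
      then show ?thesis using Y T cube by (intro cube_supportsI) auto
    next
      case True
      then have "cube Y T \<subseteq> cube S U" by (rule max[OF T cube])
      then obtain T' where "T' \<subseteq> X - Y" "cube Y T' \<subseteq> cube S U" "c \<notin> cube Y T'"
        using True \<open>Y \<noteq> S\<close> U \<open>S \<subseteq> X\<close> T by (rule shifted_subcube_avoiding)
      then show ?thesis using Y SU by (intro cube_supportsI) auto
    qed
  qed
  moreover have "S \<in> cube_supports X D" using \<open>S \<subseteq> X\<close> U SU by (rule cube_supportsI)
  ultimately show ?thesis using that by blast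
qed

lemma ample_Diff_corner:
  assumes "finite X" "D \<subseteq> Pow X" "ample X D" "corner X D c"
  shows "ample X (D - {c})"
proof -
  obtain S where S: "S \<in> cube_supports X D"
    and sub: "cube_supports X D - {S} \<subseteq> cube_supports X (D - {c})"
    using assms(2,4) by (rule cube_supports_Diff_corner)
  have P: "D - {c} \<subseteq> Pow X" using assms(2) by blast
  have "c \<in> D" using assms(4) unfolding corner_def by blast
  have "card D - 1 = card (cube_supports X D) - 1"
    using ample_iff_card_cube_supports[OF assms(1,2)] assms(3) by simp
  also have "\<dots> = card (cube_supports X D - {S})"
    using S finite_cube_supports[OF assms(1)] by simp
  also have "\<dots> \<le> card (cube_supports X (D - {c}))"
    using finite_cube_supports[OF assms(1)] sub by (rule card_mono)
  finally have "card (D - {c}) \<le> card (cube_supports X (D - {c}))"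
    using \<open>c \<in> D\<close> assms(1,2) by (metis card_Diff_singleton finite_Pow_iff finite_subset)
  then have "card (cube_supports X (D - {c})) = card (D - {c})"
    using card_cube_supports_le[OF assms(1) P] by linarith
  then show ?thesis by (rule ample_if_card_cube_supports[OF assms(1) P])
qed

section \<open>Ample classes of VC-dimension at most 2\<close>

definition edge_side :: "'a \<Rightarrow> bool \<Rightarrow> 'a set set \<Rightarrow> 'a set set" where
  "edge_side x s D = {d \<in> D. (x \<in> d) = s \<and> flip x d \<in> D}"

lemma edge_side_subset_halfspace: "edge_side x s D \<subseteq> halfspace x s D"
  unfolding edge_side_def halfspace_def by blast

lemma shatters_edge_side:
  assumes "shatters (edge_side x s D) Y"
  shows "x \<notin> Y" "shatters D (insert x Y)"
proof -
  obtain c where "c \<in> edge_side x s D" "c \<inter> Y = (if s then {} else Y)"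
    using assms unfolding shatters_iff by (metis empty_subsetI subset_refl)
  then show "x \<notin> Y" unfolding edge_side_def by (cases s) auto
  show "shatters D (insert x Y)" unfolding shatters_iff
  proof (intro allI impI)
    fix Z assume Z: "Z \<subseteq> insert x Y"
    then obtain c where "c \<in> edge_side x s D" "c \<inter> Y = Z - {x}"
      using assms unfolding shatters_iff by (metis Diff_subset_conv insert_is_Un)
    then have c: "c \<in> D" "flip x c \<in> D" "(x \<in> c) = s" "c \<inter> Y = Z - {x}"
      unfolding edge_side_def by auto
    show "\<exists>c\<in>D. c \<inter> insert x Y = Z"
    proof (cases "(x \<in> Z) = s")
      case True
      then have "c \<inter> insert x Y = Z" using c(3,4) Z \<open>x \<notin> Y\<close> by auto
      then show ?thesis using c(1) by blast
    next
      case False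
      then have "flip x c \<inter> insert x Y = Z" using c(3,4) Z \<open>x \<notin> Y\<close> by (auto split: if_splits)
      then show ?thesis using c(2) by blast
    qed
  qed
qed

lemma ample_edge_side:
  assumes "D \<subseteq> Pow X" "ample X D"
  shows "ample X (edge_side x s D)"
  unfolding ample_def
proof (intro allI impI, elim conjE)
  fix Y assume "Y \<subseteq> X" and sh: "shatters (edge_side x s D) Y"
  then have "x \<notin> Y" "shatters D (insert x Y)" by (auto dest: shatters_edge_side)
  moreover have "insert x Y \<subseteq> X" using shatters_subset[OF _ assms(1)] calculation by blast
  ultimately obtain T where T: "T \<subseteq> X - insert x Y" and cube: "cube (insert x Y) T \<subseteq> D"
    using assms(2) by (elim ampleE)
  define T' where "T' = (if s then insert x T else T)"
  have "cube Y T' \<subseteq> edge_side x s D"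
  proof
    fix e assume e: "e \<in> cube Y T'"
    then have "e \<in> cube (insert x Y) T" "flip x e \<in> cube (insert x Y) T"
      using T unfolding T'_def by (auto split: if_splits)
    moreover have "(x \<in> e) = s" using e T \<open>x \<notin> Y\<close> unfolding T'_def by (auto split: if_splits)
    ultimately show "e \<in> edge_side x s D" using cube unfolding edge_side_def by blast
  qed
  moreover have "T' \<subseteq> X - Y" using T \<open>insert x Y \<subseteq> X\<close> \<open>x \<notin> Y\<close> unfolding T'_def by auto
  ultimately show "\<exists>T. T \<subseteq> X - Y \<and> cube Y T \<subseteq> edge_side x s D" by blast
qed

lemma vc_bounded_edge_side:
  assumes "finite X" "D \<subseteq> Pow X" "vc_bounded X (Suc k) D"
  shows "vc_bounded X k (edge_side x s D)"
  unfolding vc_bounded_def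
proof (intro allI impI)
  fix Y assume "Y \<subseteq> X" and sh: "shatters (edge_side x s D) Y"
  then have "x \<notin> Y" "shatters D (insert x Y)" by (auto dest: shatters_edge_side)
  moreover have "insert x Y \<subseteq> X" using shatters_subset[OF _ assms(2)] calculation by blast
  ultimately have "card (insert x Y) \<le> Suc k" using assms(3) by (intro vc_boundedD)
  moreover have "finite Y" using \<open>Y \<subseteq> X\<close> assms(1) by (rule finite_subset)
  ultimately show "card Y \<le> k" using \<open>x \<notin> Y\<close> by simp
qed

lemma corner_of_halfspace_unpaired:
  assumes "corner X (halfspace x s D) h" "flip x h \<notin> D"
  shows "corner X D h"
proof -
  obtain S U where h: "h \<in> halfspace x s D" and U: "U \<subseteq> X - S" "h \<in> cube S U"
    and SU: "cube S U \<subseteq> halfspace x s D"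
    and max: "\<And>Y T. T \<subseteq> X - Y \<Longrightarrow> cube Y T \<subseteq> halfspace x s D \<Longrightarrow> h \<in> cube Y T \<Longrightarrow> cube Y T \<subseteq> cube S U"
    using assms(1) by (elim cornerE) blast
  show ?thesis
  proof (rule cornerI[OF _ U])
    show "h \<in> D" "cube S U \<subseteq> D" using h SU halfspace_subset[of x s D] by blast+
    fix Y T assume T: "T \<subseteq> X - Y" and cube: "cube Y T \<subseteq> D" and hY: "h \<in> cube Y T"
    have "x \<notin> Y"
    proof
      assume "x \<in> Y"
      then have "flip x h \<in> cube Y T" using hY T by (auto split: if_splits)
      with cube assms(2) show False by blast
    qed
    with cube have "cube Y T \<subseteq> halfspace x (x \<in> T) D" by (rule cube_subset_halfspace)
    moreover have "(x \<in> T) = s" using h hY \<open>x \<notin> Y\<close> unfolding halfspace_def by auto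
    ultimately show "cube Y T \<subseteq> cube S U" using max[OF T _ hY] by blast
  qed
qed

lemma cube_insert_subset_if_paired:
  assumes "cube S U \<subseteq> halfspace x s D" "\<And>d. d \<in> halfspace x s D \<Longrightarrow> flip x d \<in> D"
  shows "cube (insert x S) (U - {x}) \<subseteq> D"
proof
  fix e assume e: "e \<in> cube (insert x S) (U - {x})"
  have "U \<in> cube S U" "U \<union> S \<in> cube S U" by auto
  then have "U \<in> halfspace x s D" "U \<union> S \<in> halfspace x s D" using assms(1) by blast+
  then have "(x \<in> U) = s" "(x \<in> U \<union> S) = s" unfolding halfspace_def by simp_all
  define e' where "e' = (if s then insert x e else e - {x})"
  have "e' \<in> cube S U"
    using e \<open>(x \<in> U) = s\<close> \<open>(x \<in> U \<union> S) = s\<close> unfolding e'_def by (auto split: if_splits)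
  then have "e' \<in> halfspace x s D" using assms(1) by blast
  then have "e' \<in> D" "flip x e' \<in> D" using assms(2) halfspace_subset[of x s D] by blast+
  moreover have "e = e' \<or> e = flip x e'"
    unfolding e'_def by (cases s; cases "x \<in> e") (auto simp: flip_def)
  ultimately show "e \<in> D" by blast
qed

lemma corner_of_halfspace_paired:
  assumes "D \<subseteq> Pow X" "corner X (halfspace x s D) h" "\<And>d. d \<in> halfspace x s D \<Longrightarrow> flip x d \<in> D"
  shows "corner X D h"
proof -
  obtain S U where h: "h \<in> halfspace x s D" and U: "U \<subseteq> X - S" and hSU: "h \<in> cube S U"
    and SU: "cube S U \<subseteq> halfspace x s D"
    and max: "\<And>Y T. T \<subseteq> X - Y \<Longrightarrow> cube Y T \<subseteq> halfspace x s D \<Longrightarrow> h \<in> cube Y T \<Longrightarrow> cube Y T \<subseteq> cube S U"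
    using assms(2) by (elim cornerE) blast
  have hx: "(x \<in> h) = s" using h unfolding halfspace_def by simp
  have "h \<subseteq> X" using h halfspace_subset[of x s D] assms(1) by blast
  \<comment> \<open>the maximal cube at h in the halfspace, doubled along x, is the maximal cube at h in D\<close>
  show ?thesis
  proof (rule cornerI[of h D "U - {x}" X "insert x S"])
    show "h \<in> D" using h halfspace_subset[of x s D] by blast
    show "U - {x} \<subseteq> X - insert x S" "h \<in> cube (insert x S) (U - {x})" using U hSU by auto
    show "cube (insert x S) (U - {x}) \<subseteq> D" using SU assms(3) by (rule cube_insert_subset_if_paired)
    fix Y T assume T: "T \<subseteq> X - Y" and cube: "cube Y T \<subseteq> D" and hY: "h \<in> cube Y T"
    define T' where "T' = (if s then insert x T else T - {x})"
    have "T' \<subseteq> X - (Y - {x})" using T \<open>h \<subseteq> X\<close> hx hY unfolding T'_def by (auto split: if_splits)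
    moreover have "cube (Y - {x}) T' \<subseteq> halfspace x s D"
    proof
      fix e assume e: "e \<in> cube (Y - {x}) T'"
      then have "e \<in> cube Y T" using hY hx unfolding T'_def by (auto split: if_splits)
      moreover have "(x \<in> e) = s" using e unfolding T'_def by (auto split: if_splits)
      ultimately show "e \<in> halfspace x s D" using cube unfolding halfspace_def by blast
    qed
    moreover have "h \<in> cube (Y - {x}) T'" using hY hx unfolding T'_def by (auto split: if_splits)
    ultimately have "cube (Y - {x}) T' \<subseteq> cube S U" by (rule max)
    then show "cube Y T \<subseteq> cube (insert x S) (U - {x})"
      unfolding cube_subset_cube T'_def by (auto split: if_splits)
  qed
qed

lemma shatters_singleton_iff: "shatters D {x} \<longleftrightarrow> halfspace x True D \<noteq> {} \<and> halfspace x False D \<noteq> {}"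
  unfolding halfspace_def shatters_iff by (auto simp: subset_singleton_iff)

lemma vc1_halfspace_nested:
  assumes "F \<subseteq> Pow X" "vc_bounded X 1 F"
    and T: "z \<notin> T" "T \<in> halfspace x s F" "insert z T \<in> halfspace x s F"
    and q: "q \<in> halfspace x s F" "flip x q \<in> F"
  shows "halfspace z (z \<notin> q) F \<subseteq> halfspace x s F"
proof
  fix g assume g: "g \<in> halfspace z (z \<notin> q) F"
  show "g \<in> halfspace x s F"
  proof (rule ccontr)
    assume "g \<notin> halfspace x s F"
    then have gx: "(x \<in> g) = (\<not> s)" using g unfolding halfspace_def by auto
    have "z \<noteq> x" using T unfolding halfspace_def by auto
    have "shatters F {x, z}"
    proof (rule shatters_doubletonI)
      fix bx bz
      have "T \<in> F" "insert z T \<in> F" "(x \<in> T) = s" "(x \<in> insert z T) = s"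
        using T unfolding halfspace_def by auto
      moreover have "g \<in> F" "(z \<in> g) = (z \<notin> q)" using g unfolding halfspace_def by auto
      moreover have "(x \<in> flip x q) = (\<not> s)" "(z \<in> flip x q) = (z \<in> q)"
        using q(1) \<open>z \<noteq> x\<close> unfolding halfspace_def by auto
      ultimately show "\<exists>c\<in>F. (x \<in> c) = bx \<and> (z \<in> c) = bz"
        using T(1) gx q(2) by (cases "bx = s"; cases "bz = (z \<in> q)") (metis insertI1)+
    qed
    moreover have "x \<in> q \<union> flip x q" by simp
    then have "x \<in> X" using q assms(1) unfolding halfspace_def by blast
    moreover have "z \<in> X" using T(3) assms(1) unfolding halfspace_def by blast
    ultimately show False using vc_bounded_1_doubleton[OF assms(2)] \<open>z \<noteq> x\<close> by blast
  qed
qed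

lemma vc1_minimal_halfspace_singleton:
  assumes "finite X" "F \<subseteq> Pow X" "ample X F" "vc_bounded X 1 F"
    and q: "q \<in> halfspace x s F" "flip x q \<in> F"
    and min: "\<And>z t. z \<in> X \<Longrightarrow> halfspace z t F \<noteq> {} \<Longrightarrow> halfspace z t F \<noteq> F \<Longrightarrow>
      card (halfspace x s F) \<le> card (halfspace z t F)"
  shows "halfspace x s F = {q}"
proof (rule ccontr)
  define S where "S = halfspace x s F"
  have SF: "S \<subseteq> F" unfolding S_def by (rule halfspace_subset)
  then have "finite S" using assms(1,2) by (meson finite_Pow_iff finite_subset)
  assume "halfspace x s F \<noteq> {q}"
  then obtain a where "a \<in> S" "a \<noteq> q" using q(1) unfolding S_def by blast
  then obtain z where z: "z \<in> (a - q) \<union> (q - a)" by blast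
  then have "shatters S {z}" using \<open>a \<in> S\<close> q(1) unfolding S_def by (auto intro: shatters_singletonI)
  moreover have "z \<in> X" using z \<open>a \<in> S\<close> q(1) SF assms(2) unfolding S_def by blast
  moreover have "ample X S" unfolding S_def using assms(1-3) by (rule ample_halfspace)
  ultimately obtain T where T: "z \<notin> T" "T \<in> S" "insert z T \<in> S"
    by (elim ample_edge)
  define G where "G = halfspace z (z \<notin> q) F"
  have "G \<subseteq> S" unfolding G_def S_def
    using assms(2,4) T q unfolding S_def by (rule vc1_halfspace_nested)
  moreover have "q \<notin> G" unfolding G_def halfspace_def by simp
  ultimately have "card G < card S"
    using q(1) \<open>finite S\<close> unfolding S_def by (metis psubsetI psubset_card_mono)
  moreover have "T \<in> G \<or> insert z T \<in> G" using T SF unfolding G_def S_def halfspace_def by auto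
  then have "G \<noteq> {}" by blast
  moreover have "G \<noteq> F" using \<open>q \<notin> G\<close> q(1) SF unfolding S_def by blast
  ultimately show False using min[OF \<open>z \<in> X\<close>] unfolding S_def G_def by fastforce
qed

lemma ample_vc1_leaf:
  assumes "finite X" "F \<subseteq> Pow X" "ample X F" "vc_bounded X 1 F" "a \<in> F" "b \<in> F" "a \<noteq> b"
  obtains f x where "f \<in> F" "flip x f \<in> F" "halfspace x (x \<in> f) F = {f}"
proof -
  define proper where "proper = (\<lambda>(x, s). x \<in> X \<and> halfspace x s F \<noteq> {} \<and> halfspace x s F \<noteq> F)"
  obtain x0 where "x0 \<in> (a - b) \<union> (b - a)" using assms(7) by blast
  then have "proper (x0, x0 \<in> a)"
    using assms(2,5,6) unfolding proper_def halfspace_def by auto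
  \<comment> \<open>a smallest proper halfspace of F turns out to be a single leaf\<close>
  then obtain x s where xs: "proper (x, s)"
    and min: "\<And>z t. proper (z, t) \<Longrightarrow> card (halfspace x s F) \<le> card (halfspace z t F)"
    using ex_has_least_nat[of proper _ "\<lambda>(x, s). card (halfspace x s F)"] by fastforce
  have "x \<in> X" "halfspace x s F \<noteq> {}" "halfspace x s F \<noteq> F" using xs unfolding proper_def by auto
  then have "shatters F {x}"
    unfolding shatters_singleton_iff halfspace_def by (cases s) auto
  then obtain T where "x \<notin> T" "T \<in> F" "insert x T \<in> F"
    by (rule ample_edge[OF assms(3) \<open>x \<in> X\<close>])
  define q where "q = (if s then insert x T else T)"
  have q: "q \<in> halfspace x s F" "flip x q \<in> F" "(x \<in> q) = s"
    using \<open>x \<notin> T\<close> \<open>T \<in> F\<close> \<open>insert x T \<in> F\<close> unfolding q_def halfspace_def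
    by (auto simp: flip_def insert_absorb)
  have "halfspace x s F = {q}"
    using assms(1-4) q(1,2) by (rule vc1_minimal_halfspace_singleton)
      (use min in \<open>simp add: proper_def\<close>)
  moreover have "q \<in> F" using q(1) halfspace_subset[of x s F] by blast
  ultimately show ?thesis using q(2,3) by (intro that[of q x]) simp_all
qed

lemma cube_edge_cases:
  assumes "e \<in> cube {x} (f - {x})"
  shows "e = f \<or> e = flip x f"
proof -
  have same: "y \<in> e \<longleftrightarrow> y \<in> f" if "y \<noteq> x" for y using assms that by auto
  show ?thesis
  proof (cases "x \<in> e \<longleftrightarrow> x \<in> f")
    case True
    then have "e = f" by (intro set_eqI) (metis same)
    then show ?thesis ..
  next
    case False
    then have "e = flip x f" by (intro set_eqI) (metis mem_flip_iff same)
    then show ?thesis ..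
  qed
qed

lemma halfspace_singletonD: "halfspace x s D = {f} \<Longrightarrow> f \<in> D \<and> (x \<in> f) = s"
  unfolding halfspace_def by (metis (mono_tags, lifting) insertI1 mem_Collect_eq)

lemma cube_through_leaf:
  assumes leaf: "halfspace x s D = {f}"
    and T: "T \<subseteq> X - Y" and cube: "cube Y T \<subseteq> D" and f: "f \<in> cube Y T"
  shows "cube Y T \<subseteq> cube {x} (f - {x})"
proof -
  have "Y \<subseteq> {x}"
  proof
    fix y assume "y \<in> Y"
    show "y \<in> {x}"
    proof (rule ccontr)
      assume "y \<notin> {x}"
      have "y \<notin> T" using T \<open>y \<in> Y\<close> by blast
      then have "T \<subseteq> flip y f" using f by (intro subset_flipI) simp_all
      moreover have "flip y f \<subseteq> T \<union> Y" using flip_subset_insert[of y f] f \<open>y \<in> Y\<close> by auto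
      ultimately have "flip y f \<in> cube Y T" by simp
      then have "flip y f \<in> D" using cube by blast
      moreover have "(x \<in> flip y f) = s" using halfspace_singletonD[OF leaf] \<open>y \<notin> {x}\<close> by auto
      ultimately have "flip y f \<in> halfspace x s D" unfolding halfspace_def by simp
      then have "flip y f = f" using leaf by simp
      with flip_neq[of y f] show False by contradiction
    qed
  qed
  moreover have "T \<subseteq> f" "f \<subseteq> T \<union> Y" using f by simp_all
  ultimately have "f - {x} \<subseteq> T" "T \<union> Y \<subseteq> (f - {x}) \<union> {x}" by blast+
  then show ?thesis unfolding cube_subset_cube by blast
qed

lemma corner_if_halfspace_singleton:
  assumes "D \<subseteq> Pow X" "halfspace x s D = {f}" "flip x f \<in> D"
  shows "corner X D f"
proof (rule cornerI)
  show "f \<in> D" using halfspace_singletonD[OF assms(2)] by simp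
  then show "f - {x} \<subseteq> X - {x}" using assms(1) by blast
  show "f \<in> cube {x} (f - {x})" by auto
  show "cube {x} (f - {x}) \<subseteq> D"
  proof
    fix e assume "e \<in> cube {x} (f - {x})"
    then have "e = f \<or> e = flip x f" by (rule cube_edge_cases)
    then show "e \<in> D" using \<open>f \<in> D\<close> assms(3) by blast
  qed
  show "\<And>Y T. T \<subseteq> X - Y \<Longrightarrow> cube Y T \<subseteq> D \<Longrightarrow> f \<in> cube Y T \<Longrightarrow> cube Y T \<subseteq> cube {x} (f - {x})"
    using assms(2) by (rule cube_through_leaf)
qed

lemma corner_of_Diff_leaf:
  assumes "corner X (D - {f}) c" "c \<noteq> f" "c \<noteq> flip x f" "halfspace x s D = {f}"
  shows "corner X D c"
proof -
  obtain S U where "c \<in> D - {f}" "c \<in> cube S U" and U: "U \<subseteq> X - S" and SU: "cube S U \<subseteq> D - {f}"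
    and max: "\<And>Y T. T \<subseteq> X - Y \<Longrightarrow> cube Y T \<subseteq> D - {f} \<Longrightarrow> c \<in> cube Y T \<Longrightarrow> cube Y T \<subseteq> cube S U"
    using assms(1) by (elim cornerE) blast
  show ?thesis
  proof (rule cornerI[OF _ U \<open>c \<in> cube S U\<close>])
    show "c \<in> D" "cube S U \<subseteq> D" using \<open>c \<in> D - {f}\<close> SU by blast+
    fix Y T assume T: "T \<subseteq> X - Y" and cube: "cube Y T \<subseteq> D" and "c \<in> cube Y T"
    have "f \<notin> cube Y T"
    proof
      assume "f \<in> cube Y T"
      with assms(4) T cube have "cube Y T \<subseteq> cube {x} (f - {x})" by (rule cube_through_leaf)
      then have "c = f \<or> c = flip x f" using \<open>c \<in> cube Y T\<close> by (intro cube_edge_cases) blast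
      with assms(2,3) show False by blast
    qed
    then have "cube Y T \<subseteq> D - {f}" using cube by blast
    then show "cube Y T \<subseteq> cube S U" using T \<open>c \<in> cube Y T\<close> by (intro max)
  qed
qed

lemma corner_singleton: "c \<subseteq> X \<Longrightarrow> corner X {c} c"
  by (rule cornerI[of c "{c}" "c" X "{}"]) auto

context
  fixes X :: "'a set" and D :: "'a set set"
  assumes IH: "\<And>D' F'. card D' < card D \<Longrightarrow> D' \<subseteq> Pow X \<Longrightarrow> ample X D' \<Longrightarrow> vc_bounded X 2 D' \<Longrightarrow>
      F' \<subseteq> D' \<Longrightarrow> F' \<noteq> D' \<Longrightarrow> ample X F' \<Longrightarrow> vc_bounded X 1 F' \<Longrightarrow> \<exists>c\<in>D' - F'. corner X D' c"
    and X: "finite X" and D: "D \<subseteq> Pow X" "ample X D" "vc_bounded X 2 D"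
begin

lemma corner_in_halfspace:
  assumes "halfspace x s D \<noteq> D"
    and G: "G \<subseteq> edge_side x s D" "G \<noteq> halfspace x s D" "ample X G" "vc_bounded X 1 G"
  shows "\<exists>h \<in> halfspace x s D - G. corner X D h"
proof -
  let ?H = "halfspace x s D"
  have "finite D" using X D(1) by (meson finite_Pow_iff finite_subset)
  then have "card ?H < card D" using halfspace_subset assms(1) by (metis psubsetI psubset_card_mono)
  moreover have "?H \<subseteq> Pow X" using halfspace_subset D(1) by (rule order_trans)
  moreover have "ample X ?H" using X D(1,2) by (rule ample_halfspace)
  moreover have "vc_bounded X 2 ?H" using D(3) halfspace_subset by (rule vc_bounded_mono)
  moreover note IH
  ultimately have IH_H: "\<And>F'. F' \<subseteq> ?H \<Longrightarrow> F' \<noteq> ?H \<Longrightarrow> ample X F' \<Longrightarrow> vc_bounded X 1 F' \<Longrightarrow>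
      \<exists>h\<in>?H - F'. corner X ?H h"
    by blast
  show ?thesis
  proof (cases "edge_side x s D = ?H")
    case True
    then obtain h where "h \<in> ?H - G" "corner X ?H h"
      using IH_H[OF _ G(2-4)] G(1) by blast
    moreover have "flip x d \<in> D" if "d \<in> ?H" for d
      using that True unfolding edge_side_def by blast
    ultimately show ?thesis using corner_of_halfspace_paired[OF D(1)] by blast
  next
    case False
    have "vc_bounded X (Suc 1) D" using D(3) by (simp add: numeral_2_eq_2)
    with X D(1) have "vc_bounded X 1 (edge_side x s D)" by (rule vc_bounded_edge_side)
    then obtain h where h: "h \<in> ?H - edge_side x s D" "corner X ?H h"
      using IH_H[OF edge_side_subset_halfspace False ample_edge_side[OF D(1,2)]] by blast
    then have "flip x h \<notin> D" unfolding edge_side_def halfspace_def by blast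
    with h(2) have "corner X D h" by (rule corner_of_halfspace_unpaired)
    then show ?thesis using h(1) G(1) by blast
  qed
qed

lemma corner_outside_subsingleton:
  assumes F: "F \<subseteq> {f}" "f \<in> D" "F \<noteq> D"
  shows "\<exists>c\<in>D - F. corner X D c"
proof (cases "D = {f}")
  case True
  then have "F = {}" using F by blast
  moreover have "f \<subseteq> X" using F(2) D(1) by blast
  then have "corner X D f" unfolding True by (rule corner_singleton)
  ultimately show ?thesis using F(2) by blast
next
  case False
  then obtain a where "a \<in> D" "a \<noteq> f" using F(2) by blast
  then obtain x where "x \<in> (a - f) \<union> (f - a)" by blast
  define H where "H = halfspace x (x \<in> a) D"
  have "a \<in> H" "f \<notin> H" using \<open>a \<in> D\<close> \<open>x \<in> (a - f) \<union> (f - a)\<close> unfolding H_def halfspace_def by auto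
  then have "H \<noteq> D" "{} \<noteq> H" using F(2) by blast+
  then have "\<exists>h\<in>H - {}. corner X D h"
    unfolding H_def by (intro corner_in_halfspace ample_empty vc_bounded_empty) simp_all
  then obtain h where "h \<in> H" "corner X D h" by blast
  moreover have "h \<in> D" using \<open>h \<in> H\<close> unfolding H_def halfspace_def by simp
  moreover have "h \<notin> F" using \<open>h \<in> H\<close> \<open>f \<notin> H\<close> F(1) by blast
  ultimately show ?thesis by blast
qed

lemma corner_outside_leaf_proper:
  assumes F: "F \<subseteq> D"
    and leaf: "f \<in> F" "flip x f \<in> F" "halfspace x (x \<in> f) F = {f}" "halfspace x (x \<in> f) D \<noteq> {f}"
  shows "\<exists>c\<in>D - F. corner X D c"
proof -
  define H where "H = halfspace x (x \<in> f) D"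
  have "f \<in> D" "flip x f \<in> D" using leaf(1,2) F by blast+
  then have "f \<in> edge_side x (x \<in> f) D" unfolding edge_side_def by simp
  moreover have "flip x f \<in> D - H" using \<open>flip x f \<in> D\<close> unfolding H_def halfspace_def by simp
  then have "H \<noteq> D" by blast
  moreover have "f \<subseteq> X" using \<open>f \<in> D\<close> D(1) by blast
  ultimately have "\<exists>h\<in>H - {f}. corner X D h"
    unfolding H_def using leaf(4)
    by (intro corner_in_halfspace ample_singleton vc_bounded_singleton) simp_all
  then obtain h where "h \<in> H" "h \<noteq> f" "corner X D h" by blast
  moreover have "h \<in> D" using \<open>h \<in> H\<close> unfolding H_def halfspace_def by simp
  moreover have "h \<notin> F"
    using leaf(3) \<open>h \<in> H\<close> \<open>h \<noteq> f\<close> unfolding H_def halfspace_def by blast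
  ultimately show ?thesis by blast
qed

lemma corner_outside_leaf_corner:
  assumes F: "F \<subseteq> D" "F \<noteq> D" "ample X F" "vc_bounded X 1 F"
    and leaf: "f \<in> F" "flip x f \<in> F" "halfspace x (x \<in> f) F = {f}" "halfspace x (x \<in> f) D = {f}"
  shows "\<exists>c\<in>D - F. corner X D c"
proof -
  have "f \<in> D" "flip x f \<in> D" using leaf(1,2) F(1) by blast+
  have "corner X D f" using D(1) leaf(4) \<open>flip x f \<in> D\<close> by (rule corner_if_halfspace_singleton)
  then have ample_D': "ample X (D - {f})" using X D(1,2) by (intro ample_Diff_corner)
  have "F - {f} = halfspace x (x \<notin> f) F"
    using leaf(3) unfolding halfspace_def by auto
  then have ample_F': "ample X (F - {f})"
    using ample_halfspace[OF X order_trans[OF F(1) D(1)] F(3)] by simp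
  have card: "card (D - {f}) < card D"
    using \<open>f \<in> D\<close> X D(1) by (meson card_Diff1_less finite_Pow_iff finite_subset)
  have "\<exists>c\<in>(D - {f}) - (F - {f}). corner X (D - {f}) c"
  proof (rule IH[OF card _ ample_D' _ _ _ ample_F'])
    show "D - {f} \<subseteq> Pow X" "F - {f} \<subseteq> D - {f}" using D(1) F(1) by blast+
    show "F - {f} \<noteq> D - {f}" using F(1,2) leaf(1) \<open>f \<in> D\<close> by blast
    show "vc_bounded X 2 (D - {f})" "vc_bounded X 1 (F - {f})"
      using vc_bounded_mono[OF D(3)] vc_bounded_mono[OF F(4)] by blast+
  qed
  then obtain c where c: "c \<in> (D - {f}) - (F - {f})" "corner X (D - {f}) c" by blast
  have "c \<noteq> f" "c \<noteq> flip x f" using c(1) leaf(2) by blast+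
  with c(2) leaf(4) have "corner X D c" by (blast intro: corner_of_Diff_leaf)
  then show ?thesis using c(1) by blast
qed

end

lemma corner_outside:
  assumes "finite X" "D \<subseteq> Pow X" "ample X D" "vc_bounded X 2 D"
    and "F \<subseteq> D" "F \<noteq> D" "ample X F" "vc_bounded X 1 F"
  shows "\<exists>c\<in>D - F. corner X D c"
  using assms(2-)
proof (induction "card D" arbitrary: D F rule: less_induct)
  case less
  note IH = less.hyps and D = less.prems(1-3) and F = less.prems(4-7)
  \<comment> \<open>below, instantiating the lemmas with IH leaves IH's own premises, closed by assumption\<close>
  show ?case
  proof (cases "\<exists>a b. a \<in> F \<and> b \<in> F \<and> a \<noteq> b")
    case True
    then obtain a b where "a \<in> F" "b \<in> F" "a \<noteq> b" by blast
    moreover have "F \<subseteq> Pow X" using F(1) D(1) by (rule order_trans)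
    ultimately obtain f x where "f \<in> F" "flip x f \<in> F" "halfspace x (x \<in> f) F = {f}"
      using ample_vc1_leaf[OF assms(1)] F(3,4) by metis
    show ?thesis
    proof (cases "halfspace x (x \<in> f) D = {f}")
      case True
      with \<open>f \<in> F\<close> \<open>flip x f \<in> F\<close> \<open>halfspace x (x \<in> f) F = {f}\<close> show ?thesis
        by - (rule corner_outside_leaf_corner[OF IH assms(1) D F], assumption+)
    next
      case False
      with \<open>f \<in> F\<close> \<open>flip x f \<in> F\<close> \<open>halfspace x (x \<in> f) F = {f}\<close> show ?thesis
        by - (rule corner_outside_leaf_proper[OF IH assms(1) D F(1)], assumption+)
    qed
  next
    case False
    obtain f where "F \<subseteq> {f}" "f \<in> D"
    proof (cases "F = {}")
      case True
      then show ?thesis using that F(2) by blast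
    next
      case False
      then obtain f where "f \<in> F" by blast
      then have "F \<subseteq> {f}" using \<open>\<not> (\<exists>a b. a \<in> F \<and> b \<in> F \<and> a \<noteq> b)\<close> by blast
      then show ?thesis using that \<open>f \<in> F\<close> F(1) by blast
    qed
    with F(2) show ?thesis by - (rule corner_outside_subsingleton[OF IH assms(1) D], assumption+)
  qed
qed

section \<open>Conditional antimatroids\<close>

lemma cond_antimatroid_Int: "cond_antimatroid C \<Longrightarrow> c \<in> C \<Longrightarrow> c' \<in> C \<Longrightarrow> c \<inter> c' \<in> C"
  unfolding cond_antimatroid_def by blast

lemma cond_antimatroid_ex_pts:
  "cond_antimatroid C \<Longrightarrow> c \<in> C \<Longrightarrow> c' \<in> C \<Longrightarrow> ex_pts C c \<subseteq> c' \<Longrightarrow> c \<subseteq> c'"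
  unfolding cond_antimatroid_def by blast

lemma cond_antimatroid_Diff_point:
  assumes ca: "cond_antimatroid C" and sh: "shatters C Y" and a: "a \<in> C" "Y \<subseteq> a"
    and least: "\<And>c. c \<in> C \<Longrightarrow> Y \<subseteq> c \<Longrightarrow> a \<subseteq> c" and "y \<in> Y"
  shows "a - {y} \<in> C"
proof -
  have ex_Y: "ex_pts C a \<subseteq> Y"
  proof
    fix x assume x: "x \<in> ex_pts C a"
    then have "x \<in> a" "a - {x} \<in> C" unfolding ex_pts_def by auto
    then show "x \<in> Y" using least[of "a - {x}"] a(2) by blast
  qed
  obtain c where "c \<in> C" "c \<inter> Y = Y - {y}" using sh unfolding shatters_iff by blast
  \<comment> \<open>c \<inter> a misses y, so some extremal point of a lies outside c; on Y that can only be y\<close>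
  then have "c \<inter> a \<in> C" "\<not> a \<subseteq> c \<inter> a"
    using ca a(1) \<open>y \<in> Y\<close> a(2) by (auto intro: cond_antimatroid_Int)
  then obtain x where "x \<in> ex_pts C a" "x \<notin> c \<inter> a"
    using cond_antimatroid_ex_pts[OF ca a(1)] by blast
  moreover from this have "x = y" using ex_Y \<open>c \<inter> Y = Y - {y}\<close> unfolding ex_pts_def by blast
  ultimately show ?thesis unfolding ex_pts_def by simp
qed

lemma cond_antimatroid_least_superset:
  assumes "finite C" "cond_antimatroid C" "c0 \<in> C" "Y \<subseteq> c0"
  obtains a where "a \<in> C" "Y \<subseteq> a" "\<And>c. c \<in> C \<Longrightarrow> Y \<subseteq> c \<Longrightarrow> a \<subseteq> c"
proof -
  have "finite {c \<in> C. Y \<subseteq> c}" "{c \<in> C. Y \<subseteq> c} \<noteq> {}" using assms(1,3,4) by auto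
  then have "\<exists>a \<in> {c \<in> C. Y \<subseteq> c}. \<forall>c \<in> {c \<in> C. Y \<subseteq> c}. c \<subseteq> a \<longrightarrow> a = c"
    by (rule finite_has_minimal)
  then obtain a where "a \<in> {c \<in> C. Y \<subseteq> c}" and "\<forall>c \<in> {c \<in> C. Y \<subseteq> c}. c \<subseteq> a \<longrightarrow> a = c" ..
  then have a: "a \<in> C" "Y \<subseteq> a" and min: "\<And>c. c \<in> C \<Longrightarrow> Y \<subseteq> c \<Longrightarrow> c \<subseteq> a \<Longrightarrow> a = c"
    by simp_all
  have "a \<subseteq> c" if "c \<in> C" "Y \<subseteq> c" for c
    using min[of "a \<inter> c"] cond_antimatroid_Int[OF assms(2) a(1) that(1)] a(2) that(2) by blast
  with a show ?thesis using that by blast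
qed

lemma cond_antimatroid_Diff_finite:
  assumes "cond_antimatroid C" "a \<in> C" "finite W" "\<And>w. w \<in> W \<Longrightarrow> a - {w} \<in> C"
  shows "a - W \<in> C"
  using assms(3,4)
proof (induction W rule: finite_induct)
  case empty
  then show ?case using assms(2) by simp
next
  case (insert w W)
  then have "(a - W) \<inter> (a - {w}) \<in> C" by (intro cond_antimatroid_Int[OF assms(1)]) simp_all
  moreover have "(a - W) \<inter> (a - {w}) = a - insert w W" by blast
  ultimately show ?case by simp
qed

lemma cond_antimatroid_ample:
  assumes X: "finite X" and C: "C \<subseteq> Pow X" and ca: "cond_antimatroid C"
  shows "ample X C"
  unfolding ample_def
proof (intro allI impI, elim conjE)
  fix Y assume "Y \<subseteq> X" and sh: "shatters C Y"
  have "finite C" using X C by (meson finite_Pow_iff finite_subset)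
  obtain c0 where "c0 \<in> C" "c0 \<inter> Y = Y" using sh unfolding shatters_iff by blast
  then have "Y \<subseteq> c0" by blast
  obtain a where a: "a \<in> C" "Y \<subseteq> a" and least: "\<And>c. c \<in> C \<Longrightarrow> Y \<subseteq> c \<Longrightarrow> a \<subseteq> c"
    using \<open>finite C\<close> ca \<open>c0 \<in> C\<close> \<open>Y \<subseteq> c0\<close> by (rule cond_antimatroid_least_superset) auto
  have point: "a - {y} \<in> C" if "y \<in> Y" for y
    by (rule cond_antimatroid_Diff_point[OF ca sh a _ that]) (rule least)
  have "cube Y (a - Y) \<subseteq> C"
  proof
    fix e assume "e \<in> cube Y (a - Y)"
    then have "e = a - (a - e)" "a - e \<subseteq> Y" using a(2) by auto
    have "finite (a - e)" using a(1) C X by (meson PowD finite_Diff finite_subset subsetD)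
    then have "a - (a - e) \<in> C"
      by (rule cond_antimatroid_Diff_finite[OF ca a(1)]) (use point \<open>a - e \<subseteq> Y\<close> in blast)
    with \<open>e = a - (a - e)\<close> show "e \<in> C" by simp
  qed
  moreover have "a - Y \<subseteq> X - Y" using a(1) C by blast
  ultimately show "\<exists>T. T \<subseteq> X - Y \<and> cube Y T \<subseteq> C" by blast
qed

lemma cond_antimatroid_Diff_maximal:
  assumes ca: "cond_antimatroid C" and c: "c \<in> C" "\<And>d. d \<in> C \<Longrightarrow> c \<subseteq> d \<Longrightarrow> d = c" and "C \<noteq> {c}"
  shows "cond_antimatroid (C - {c})"
  unfolding cond_antimatroid_def
proof (intro conjI ballI impI)
  obtain d where "d \<in> C" "d \<noteq> c" using \<open>C \<noteq> {c}\<close> c(1) by blast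
  then have "c \<noteq> {}" using c(2) by blast
  then show "{} \<in> C - {c}" using ca unfolding cond_antimatroid_def by blast
next
  fix c1 c2 assume c1: "c1 \<in> C - {c}" and c2: "c2 \<in> C - {c}"
  then have "c1 \<inter> c2 \<in> C" using cond_antimatroid_Int[OF ca] by blast
  moreover have "c1 \<inter> c2 \<noteq> c" using c(2)[of c1] c1 by blast
  ultimately show "c1 \<inter> c2 \<in> C - {c}" by blast
next
  fix c1 c2 assume c1: "c1 \<in> C - {c}" and c2: "c2 \<in> C - {c}" and "ex_pts (C - {c}) c1 \<subseteq> c2"
  moreover have "ex_pts C c1 \<subseteq> ex_pts (C - {c}) c1"
    using c(2)[of c1] c1 unfolding ex_pts_def by blast
  ultimately show "c1 \<subseteq> c2" using cond_antimatroid_ex_pts[OF ca] by blast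
qed

section \<open>Dismantling\<close>

lemma dismantlable_by_peeling:
  assumes "finite D" "P D"
    and ample: "\<And>E. P E \<Longrightarrow> ample X E"
    and peel: "\<And>E. P E \<Longrightarrow> E \<noteq> {} \<Longrightarrow> \<exists>c\<in>E. P (E - {c})"
  shows "dismantlable X D"
  using assms(1,2)
proof (induction D rule: finite_psubset_induct)
  case (psubset D)
  show ?case
  proof (cases "D = {}")
    case True
    then show ?thesis unfolding dismantlable_def by (intro exI[of _ "[]"]) simp
  next
    case False
    then obtain c where c: "c \<in> D" "P (D - {c})" using peel psubset.prems by blast
    then have "dismantlable X (D - {c})" using psubset.IH by blast
    then obtain cs where cs: "distinct cs" "set cs = D - {c}"
      "\<forall>i\<in>{1..length cs}. ample X (set (take i cs))"
      unfolding dismantlable_def by blast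
    have "ample X (set (take i (cs @ [c])))" if "i \<in> {1..length (cs @ [c])}" for i
    proof (cases "i \<le> length cs")
      case True
      then show ?thesis using cs(3) that by simp
    next
      case False
      then have "set (take i (cs @ [c])) = D" using that cs(2) c(1) by auto
      then show ?thesis using ample psubset.prems by simp
    qed
    moreover have "distinct (cs @ [c])" "set (cs @ [c]) = D" using cs(1,2) c(1) by auto
    ultimately show ?thesis unfolding dismantlable_def by blast
  qed
qed

lemma cond_antimatroid_dismantlable:
  assumes X: "finite X" and "C \<subseteq> Pow X" "cond_antimatroid C"
  shows "dismantlable X C"
proof (rule dismantlable_by_peeling)
  let ?P = "\<lambda>E. E \<subseteq> Pow X \<and> (E = {} \<or> cond_antimatroid E)"
  show "finite C" using X assms(2) by (meson finite_Pow_iff finite_subset)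
  show "?P C" using assms(2,3) by simp
  show "ample X E" if "?P E" for E
  proof (cases "E = {}")
    case True
    then show ?thesis by (simp add: ample_empty)
  next
    case False
    with that show ?thesis by (intro cond_antimatroid_ample[OF X]) simp_all
  qed
  show "\<exists>c\<in>E. ?P (E - {c})" if E: "?P E" "E \<noteq> {}" for E
  proof -
    have "finite E" using X E(1) by (meson finite_Pow_iff finite_subset)
    then have "\<exists>c \<in> E. \<forall>d \<in> E. c \<subseteq> d \<longrightarrow> c = d" using E(2) by (rule finite_has_maximal)
    then obtain c where "c \<in> E" and max: "\<forall>d \<in> E. c \<subseteq> d \<longrightarrow> c = d" ..
    have "E - {c} = {} \<or> cond_antimatroid (E - {c})"
    proof (cases "E = {c}")
      case False
      moreover have "cond_antimatroid E" using E by simp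
      ultimately have "cond_antimatroid (E - {c})"
        using \<open>c \<in> E\<close> max by (intro cond_antimatroid_Diff_maximal) auto
      then show ?thesis ..
    qed simp
    moreover have "E - {c} \<subseteq> Pow X" using E(1) by blast
    ultimately show ?thesis using \<open>c \<in> E\<close> by blast
  qed
qed

lemma ample_vc2_dismantlable:
  assumes X: "finite X" and "C \<subseteq> Pow X" "ample X C" "vc_bounded X 2 C"
  shows "dismantlable X C"
proof (rule dismantlable_by_peeling)
  let ?P = "\<lambda>E. E \<subseteq> Pow X \<and> ample X E \<and> vc_bounded X 2 E"
  show "finite C" using X assms(2) by (meson finite_Pow_iff finite_subset)
  show "?P C" using assms(2-4) by simp
  show "ample X E" if "?P E" for E using that by simp
  show "\<exists>c\<in>E. ?P (E - {c})" if E: "?P E" "E \<noteq> {}" for E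
  proof -
    have "\<exists>c\<in>E - {}. corner X E c"
      using E by (intro corner_outside[OF X] ample_empty vc_bounded_empty) auto
    then obtain c where "c \<in> E" "corner X E c" by blast
    moreover from this have "ample X (E - {c})" using X E(1) by (intro ample_Diff_corner) simp_all
    moreover have "vc_bounded X 2 (E - {c})" using E(1) vc_bounded_mono[of X 2 E "E - {c}"] by blast
    moreover have "E - {c} \<subseteq> Pow X" using E(1) by blast
    ultimately show ?thesis by blast
  qed
qed

theorem proposition4p7:
  fixes X :: "'a set" and C :: "'a set set"
  assumes "finite X" and "C \<subseteq> Pow X"
  shows "(cond_antimatroid C \<longrightarrow> dismantlable X C)
       \<and> (ample X C \<and> vc_dim X C \<le> 2 \<longrightarrow> dismantlable X C)"
proof (intro conjI impI)
  show "dismantlable X C" if "cond_antimatroid C"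
    using assms that by (rule cond_antimatroid_dismantlable)
  show "dismantlable X C" if "ample X C \<and> vc_dim X C \<le> 2"
    using assms that vc_bounded_vc_dim[OF assms(1)] by (intro ample_vc2_dismantlable) simp_all
qed

end
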